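(* Let $\mathcal{V}$ be a finite vocabulary with $|\mathcal{V}|\ge2$ and $p(\cdot\mid c)$ a fixed (temperature-scaled) next-token distribution over $\mathcal{V}$ for every context $c$; let $q(\cdot\mid x)$ be a sampling policy over responses. For a prompt $x=(x_1,\dots,x_L)$ with $L\ge2$ define the prompt entropy $V(x):=\frac{1}{L-1}\sum_{l=2}^{L}\mathcal{H}(p(\cdot\mid x_{<l}))$. For a response $y=(y_1,\dots,y_{T})$ define $U(x,y):=\frac1{T}\sum_{t=1}^{T}\mathcal{H}(p(\cdot\mid x,y_{<t}))$, let $U^*(x):=\mathbb{E}_{y\sim q(\cdot\mid x)}[U(x,y)]$, and let $\hat U(x):=\frac1n\sum_{r=1}^n U(x,y^{(r)})$ where $y^{(1)},\dots,y^{(n)}$ are i.i.d. from $q(\cdot\mid x)$. Let $x,x'$ be two prompts, and suppose there are real numbers $S_{\text{prompt}}(z),S_{\text{resp}}(z)$ for $z\in\{x,x'\}$ and constants $\delta\ge0$, $\epsilon\ge0$, $a>0$, $b\in\mathbb{R}$ such that for $z\in\{x,x'\}$: (i) $|V(z)-S_{\text{prompt}}(z)|\le\delta$ and $|U^*(z)-S_{\text{resp}}(z)|\le\delta$ (representation approximation); (ii) $|S_{\text{resp}}(z)-(aS_{\text{prompt}}(z)+b)|\le\epsilon$ (entropy propagation). Put $\Delta_V:=V(x)-V(x')$, $\Delta_U:=\hat U(x)-\hat U(x')$ and $\eta(\alpha):=\log|\mathcal{V}|\sqrt{\log(2/\alpha)/(2n)}$. Then for every $\alpha\in(0,1)$,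 with probability at least $1-2\alpha$, $$|\Delta_U-a\Delta_V|\le 2\epsilon+2(a+1)\delta+2\eta(\alpha),$$ and, in particular, if $|a\Delta_V|>2\epsilon+2(a+1)\delta+2\eta(\alpha)$, then with probability at least $1-2\alpha$, $$\operatorname{sign}(\hat U(x)-\hat U(x'))=\operatorname{sign}(V(x)-V(x')).$$
   Context: $\mathcal{H}(p)=-\sum_{v\in\mathcal{V}}p(v)\log p(v)$ is Shannon entropy (natural log); $x_{<l}$ is the prefix $(x_1,\dots,x_{l-1})$ and $(x,y_{<t})$ is the prompt followed by the first $t-1$ response tokens. $S_{\text{prompt}}$ and $S_{\text{resp}}$ are (in the paper) aggregated hidden-representation entropies of the prompt and of the response; for the statement they are any real numbers satisfying (i) and (ii). The probability is over the random rollouts used to form $\hat U(x)$ and $\hat U(x')$. *)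

theory Defs
  imports "HOL-Probability.Probability"
begin

definition entropy_pmf :: "'v::finite pmf \<Rightarrow> real" where
  "entropy_pmf P = - (\<Sum>v\<in>UNIV. pmf P v * ln (pmf P v))"

definition prompt_entropy :: "('v::finite list \<Rightarrow> 'v pmf) \<Rightarrow> 'v list \<Rightarrow> real" where
  "prompt_entropy p x =
     (1 / (real (length x) - 1)) * (\<Sum>l=2..length x. entropy_pmf (p (take (l - 1) x)))"

definition resp_entropy :: "('v::finite list \<Rightarrow> 'v pmf) \<Rightarrow> 'v list \<Rightarrow> 'v list \<Rightarrow> real" where
  "resp_entropy p x y =
     (1 / real (length y)) * (\<Sum>t=1..length y. entropy_pmf (p (x @ take (t - 1) y)))"

definition exp_resp_entropy ::
  "('v::finite list \<Rightarrow> 'v pmf) \<Rightarrow> ('v list \<Rightarrow> 'v list pmf) \<Rightarrow> 'v list \<Rightarrow> real" where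
  "exp_resp_entropy p q x = measure_pmf.expectation (q x) (\<lambda>y. resp_entropy p x y)"

definition emp_resp_entropy ::
  "('v::finite list \<Rightarrow> 'v pmf) \<Rightarrow> 'v list \<Rightarrow> 'v list list \<Rightarrow> real" where
  "emp_resp_entropy p x ys = (\<Sum>y\<leftarrow>ys. resp_entropy p x y) / real (length ys)"

end

theory Submission
  imports Defs
begin

text \<open>
  Hoeffding's inequality applied to the bounded per-rollout entropies (each lies in
  \<open>[0, ln |V|]\<close>) shows that, with probability at least \<open>1 - \<alpha>\<close> each, the empirical
  estimates are within \<open>\<eta>(\<alpha>)\<close> of \<open>U*(x)\<close> and \<open>U*(x')\<close>; the two rollout batches are
  independent, so both events hold simultaneously with probability at least \<open>1 - 2\<alpha>\<close>.
  On that event the triangle inequality through \<open>U*\<close>, \<open>S_resp\<close>, the affine law and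
  \<open>S_prompt\<close> bounds \<open>|\<Delta>U - a \<Delta>V|\<close>, and when \<open>|a \<Delta>V|\<close> exceeds this bound,
  \<open>\<Delta>U\<close> cannot have a sign different from \<open>\<Delta>V\<close>.
\<close>

lemma replicate_pmf_eq_map_Pi_pmf:
  "replicate_pmf n P = map_pmf (\<lambda>g. map g [0..<n]) (Pi_pmf {..<n} d (\<lambda>_. P))"
proof (induction n)
  case 0
  then show ?case by (simp add: map_pmf_def bind_return_pmf)
next
  case (Suc n)
  have "replicate_pmf (Suc n) P =
      do {xs \<leftarrow> replicate_pmf n P; ys \<leftarrow> replicate_pmf 1 P; return_pmf (xs @ ys)}"
    using replicate_pmf_distrib[of n 1 P] by simp
  also have "\<dots> = do {f \<leftarrow> Pi_pmf {..<n} d (\<lambda>_. P); y \<leftarrow> P; return_pmf (map f [0..<n] @ [y])}"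
    by (simp add: Suc replicate_pmf_1 map_pmf_def bind_assoc_pmf bind_return_pmf)
  also have "\<dots> = do {y \<leftarrow> P; f \<leftarrow> Pi_pmf {..<n} d (\<lambda>_. P); return_pmf (map f [0..<n] @ [y])}"
    by (rule bind_commute_pmf)
  also have "\<dots> = map_pmf (\<lambda>g. map g [0..<Suc n]) (Pi_pmf (insert n {..<n}) d (\<lambda>_. P))"
    by (simp add: Pi_pmf_insert' map_pmf_def bind_assoc_pmf bind_return_pmf)
  also have "insert n {..<n} = {..<Suc n}" by auto
  finally show ?case .
qed

lemma replicate_pmf_Hoeffding_abs_ge:
  fixes P :: "'a pmf" and f :: "'a \<Rightarrow> real"
  assumes n: "n > 0" and lu: "l < u" and f_range: "\<And>y. f y \<in> {l..u}" and \<epsilon>: "\<epsilon> \<ge> 0"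
  shows "measure_pmf.prob (replicate_pmf n P)
           {ys. \<bar>sum_list (map f ys) / real n - measure_pmf.expectation P f\<bar> \<ge> \<epsilon>}
         \<le> 2 * exp (-2 * real n * \<epsilon>\<^sup>2 / (u - l)\<^sup>2)"
proof -
  define M where "M = Pi_pmf {..<n} undefined (\<lambda>_. P)"
  have component: "map_pmf (\<lambda>g. g i) M = P" if "i < n" for i
    unfolding M_def using that by (subst Pi_pmf_component) auto
  have distr_component: "distr (measure_pmf M) borel (\<lambda>g. f (g i)) = distr (measure_pmf P) borel f"
    if "i < n" for i
  proof -
    have "distr (measure_pmf M) borel (\<lambda>g. f (g i)) =
        distr (measure_pmf (map_pmf (\<lambda>g. g i) M)) borel f"
      unfolding map_pmf_rep_eq by (subst distr_distr) (auto simp: o_def)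
    then show ?thesis using component[OF that] by simp
  qed
  have expectation: "measure_pmf.expectation M (\<lambda>g. f (g 0)) = measure_pmf.expectation P f"
    using component[OF n] by (metis integral_map_pmf)
  interpret Hoeffding_ineq_iid M "{..<n}" "\<lambda>i g. f (g i)" "\<lambda>g. f (g 0)" l u
    "measure_pmf.expectation P f"
  proof unfold_locales
    show "prob_space.indep_vars (measure_pmf M) (\<lambda>_. borel) (\<lambda>i g. f (g i)) {..<n}"
      unfolding M_def
      by (intro prob_space.indep_vars_compose2[OF _ indep_vars_Pi_pmf])
         (auto simp: measure_pmf.prob_space_axioms)
  qed (use distr_component n f_range expectation in auto)
  have "measure_pmf.prob M {g. \<bar>(\<Sum>i<n. f (g i)) / real n - measure_pmf.expectation P f\<bar> \<ge> \<epsilon>}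
      \<le> 2 * exp (-2 * real n * \<epsilon>\<^sup>2 / (u - l)\<^sup>2)"
    using Hoeffding_ineq_abs_ge'[OF \<epsilon> lu] n by (simp add: lessThan_empty_iff)
  moreover have "sum_list (map f (map g [0..<n])) = (\<Sum>i<n. f (g i))" for g
    by (simp add: sum_list_sum_nth atLeast0LessThan)
  ultimately show ?thesis
    unfolding M_def replicate_pmf_eq_map_Pi_pmf[where d = undefined] by simp
qed

lemma replicate_pmf_mean_deviation_prob_le:
  fixes P :: "'a pmf" and f :: "'a \<Rightarrow> real"
  assumes n: "n > 0" and lu: "l < u" and f_range: "\<And>y. f y \<in> {l..u}"
    and \<alpha>: "0 < \<alpha>" "\<alpha> \<le> 2"
  shows "measure_pmf.prob (replicate_pmf n P)
           {ys. (u - l) * sqrt (ln (2 / \<alpha>) / (2 * real n))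
                  \<le> \<bar>sum_list (map f ys) / real n - measure_pmf.expectation P f\<bar>}
         \<le> \<alpha>"
proof -
  define \<epsilon> where "\<epsilon> = (u - l) * sqrt (ln (2 / \<alpha>) / (2 * real n))"
  have ln_nonneg: "ln (2 / \<alpha>) \<ge> 0" using \<alpha> by simp
  have "-2 * real n * \<epsilon>\<^sup>2 / (u - l)\<^sup>2 = - ln (2 / \<alpha>)"
    unfolding \<epsilon>_def using lu n ln_nonneg by (simp add: power_mult_distrib)
  moreover have "\<epsilon> \<ge> 0" unfolding \<epsilon>_def using lu ln_nonneg by simp
  ultimately show ?thesis
    using replicate_pmf_Hoeffding_abs_ge[OF n lu f_range, of \<epsilon> P] \<alpha>
    unfolding \<epsilon>_def by (simp add: exp_minus)
qed

lemma entropy_pmf_nonneg: "entropy_pmf P \<ge> 0"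
proof -
  have "pmf P v * ln (pmf P v) \<le> 0" for v
    using pmf_nonneg[of P v] pmf_le_1[of P v]
    by (cases "pmf P v = 0") (auto intro: mult_nonneg_nonpos)
  then show ?thesis unfolding entropy_pmf_def by (simp add: sum_nonpos)
qed

lemma entropy_pmf_le_ln_card: "entropy_pmf (P :: 'v::finite pmf) \<le> ln (real CARD('v))"
proof -
  define N where "N = real CARD('v)"
  have N: "N > 0" unfolding N_def by simp
  \<comment> \<open>Gibbs' inequality against the uniform distribution, via \<open>ln t \<le> t - 1\<close>.\<close>
  have term_le: "- (pmf P v * ln (pmf P v)) - pmf P v * ln N \<le> 1 / N - pmf P v" for v
  proof (cases "pmf P v = 0")
    case False
    then have p: "pmf P v > 0" using pmf_nonneg[of P v] by linarith
    have "- (pmf P v * ln (pmf P v)) - pmf P v * ln N = pmf P v * ln (1 / (N * pmf P v))"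
      using p N by (simp add: ln_div ln_mult algebra_simps)
    also have "\<dots> \<le> pmf P v * (1 / (N * pmf P v) - 1)"
      using p N by (intro mult_left_mono ln_le_minus_one) auto
    also have "\<dots> = 1 / N - pmf P v" using p N by (simp add: field_simps)
    finally show ?thesis .
  qed (use N in simp)
  have sum_one: "(\<Sum>v\<in>UNIV. pmf P v) = 1" by (rule sum_pmf_eq_1) auto
  have "(\<Sum>v\<in>UNIV. - (pmf P v * ln (pmf P v)) - pmf P v * ln N) \<le> (\<Sum>v\<in>UNIV. 1 / N - pmf P v)"
    by (rule sum_mono) (rule term_le)
  also have "\<dots> = 0" using sum_one N by (simp add: sum_subtractf N_def)
  finally have "(\<Sum>v\<in>UNIV. - (pmf P v * ln (pmf P v))) - (\<Sum>v\<in>UNIV. pmf P v) * ln N \<le> 0"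
    by (simp add: sum_subtractf sum_distrib_right)
  then show ?thesis
    unfolding entropy_pmf_def N_def using sum_one by (simp add: sum_negf)
qed

lemma resp_entropy_bounds: "resp_entropy p x y \<in> {0..ln (real CARD('v))}"
  for p :: "'v::finite list \<Rightarrow> 'v pmf"
proof -
  let ?T = "length y" and ?H = "\<lambda>t. entropy_pmf (p (x @ take (t - 1) y))"
  have "sum ?H {1..?T} \<le> (\<Sum>t=1..?T. ln (real CARD('v)))"
    by (rule sum_mono) (rule entropy_pmf_le_ln_card)
  then have "sum ?H {1..?T} \<le> real ?T * ln (real CARD('v))" by simp
  moreover have "sum ?H {1..?T} \<ge> 0" by (simp add: sum_nonneg entropy_pmf_nonneg)
  ultimately show ?thesis
    unfolding resp_entropy_def by (cases "?T = 0") (auto simp: field_simps)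
qed

lemma emp_resp_entropy_concentration:
  fixes p :: "'v::finite list \<Rightarrow> 'v pmf" and q :: "'v list \<Rightarrow> 'v list pmf"
  assumes vocab: "CARD('v) \<ge> 2" and n: "n > 0" and \<alpha>: "0 < \<alpha>" "\<alpha> \<le> 2"
  shows "measure_pmf.prob (replicate_pmf n (q z))
           {ys. \<bar>emp_resp_entropy p z ys - exp_resp_entropy p q z\<bar>
                  < ln (real CARD('v)) * sqrt (ln (2 / \<alpha>) / (2 * real n))}
         \<ge> 1 - \<alpha>"
proof -
  let ?Q = "replicate_pmf n (q z)" and ?\<eta> = "ln (real CARD('v)) * sqrt (ln (2 / \<alpha>) / (2 * real n))"
  have off_support: "pmf ?Q ys = 0" if "length ys \<noteq> n" for ys
    using that set_replicate_pmf[of n "q z"] set_pmf_iff[of ys ?Q] by auto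
  let ?dev = "\<lambda>ys. \<bar>sum_list (map (resp_entropy p z) ys) / real n
                    - measure_pmf.expectation (q z) (resp_entropy p z)\<bar>"
  have "{ys. ?dev ys < ?\<eta>} = UNIV - {ys. ?\<eta> \<le> ?dev ys}" by auto
  then have "measure_pmf.prob ?Q {ys. ?dev ys < ?\<eta>} = 1 - measure_pmf.prob ?Q {ys. ?\<eta> \<le> ?dev ys}"
    using measure_pmf.prob_compl[of "{ys. ?\<eta> \<le> ?dev ys}" ?Q] by simp
  moreover have "measure_pmf.prob ?Q {ys. ?\<eta> \<le> ?dev ys} \<le> \<alpha>"
    using replicate_pmf_mean_deviation_prob_le[OF n _ resp_entropy_bounds[of p z] \<alpha>] vocab by simp
  moreover have "measure_pmf.prob ?Q {ys. ?dev ys < ?\<eta>} =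
      measure_pmf.prob ?Q {ys. \<bar>emp_resp_entropy p z ys - exp_resp_entropy p q z\<bar> < ?\<eta>}"
    by (rule measure_prob_cong_0)
      (auto simp: emp_resp_entropy_def exp_resp_entropy_def intro!: off_support)
  ultimately show ?thesis by linarith
qed

lemma pair_pmf_prob_times_ge:
  fixes M :: "'a::countable pmf" and N :: "'b::countable pmf"
  assumes "measure_pmf.prob M A \<ge> 1 - \<alpha>" and "measure_pmf.prob N B \<ge> 1 - \<beta>"
  shows "measure_pmf.prob (pair_pmf M N) (A \<times> B) \<ge> 1 - \<alpha> - \<beta>"
proof -
  have "(1 - measure_pmf.prob M A) * (1 - measure_pmf.prob N B) \<ge> 0"
    by (simp add: measure_pmf.prob_le_1)
  then show ?thesis
    using assms by (simp add: measure_pmf_prob_product algebra_simps)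
qed

lemma abs_diff_sub_affine_diff_le:
  fixes V V' U U' Sp Sp' Sr Sr' Uhat Uhat' a b \<delta> \<epsilon> \<eta> :: real
  assumes a: "a > 0"
    and "\<bar>V - Sp\<bar> \<le> \<delta>" "\<bar>V' - Sp'\<bar> \<le> \<delta>" "\<bar>U - Sr\<bar> \<le> \<delta>" "\<bar>U' - Sr'\<bar> \<le> \<delta>"
    and "\<bar>Sr - (a * Sp + b)\<bar> \<le> \<epsilon>" "\<bar>Sr' - (a * Sp' + b)\<bar> \<le> \<epsilon>"
    and "\<bar>Uhat - U\<bar> \<le> \<eta>" "\<bar>Uhat' - U'\<bar> \<le> \<eta>"
  shows "\<bar>(Uhat - Uhat') - a * (V - V')\<bar> \<le> 2 * \<epsilon> + 2 * (a + 1) * \<delta> + 2 * \<eta>"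
proof -
  have "\<bar>a * V - a * Sp\<bar> \<le> a * \<delta>" "\<bar>a * V' - a * Sp'\<bar> \<le> a * \<delta>"
    using assms by (simp_all add: abs_mult flip: right_diff_distrib)
  then show ?thesis using assms unfolding abs_le_iff by (simp add: algebra_simps)
qed

lemma sgn_eq_if_abs_diff_le:
  fixes d v a B :: real
  assumes "a > 0" and "\<bar>d - a * v\<bar> \<le> B" and "\<bar>a * v\<bar> > B"
  shows "sgn d = sgn v"
proof -
  have "\<bar>d - a * v\<bar> < \<bar>a * v\<bar>" using assms(2,3) by linarith
  then have "sgn d = sgn (a * v)" by (auto simp: sgn_if abs_if split: if_splits)
  then show ?thesis using assms(1) by (simp add: sgn_mult)
qed

theorem theorem1:
  fixes p :: "'v::finite list \<Rightarrow> 'v pmf"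
    and q :: "'v list \<Rightarrow> 'v list pmf"
    and x x' :: "'v list"
    and n :: nat
    and Sp Sr Sp' Sr' \<delta> \<epsilon> a b :: real
  assumes vocab: "CARD('v) \<ge> 2"
    and len_x: "length x \<ge> 2" and len_x': "length x' \<ge> 2"
    and n_pos: "n \<ge> 1"
    and \<delta>_nonneg: "\<delta> \<ge> 0" and \<epsilon>_nonneg: "\<epsilon> \<ge> 0" and a_pos: "a > 0"
    and approx_prompt_x: "\<bar>prompt_entropy p x - Sp\<bar> \<le> \<delta>"
    and approx_resp_x: "\<bar>exp_resp_entropy p q x - Sr\<bar> \<le> \<delta>"
    and approx_prompt_x': "\<bar>prompt_entropy p x' - Sp'\<bar> \<le> \<delta>"
    and approx_resp_x': "\<bar>exp_resp_entropy p q x' - Sr'\<bar> \<le> \<delta>"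
    and prop_x: "\<bar>Sr - (a * Sp + b)\<bar> \<le> \<epsilon>"
    and prop_x': "\<bar>Sr' - (a * Sp' + b)\<bar> \<le> \<epsilon>"
  shows "\<forall>\<alpha>::real. 0 < \<alpha> \<and> \<alpha> < 1 \<longrightarrow>
    (let \<eta> = ln (real CARD('v)) * sqrt (ln (2 / \<alpha>) / (2 * real n));
         bound = 2 * \<epsilon> + 2 * (a + 1) * \<delta> + 2 * \<eta>;
         \<Delta>V = prompt_entropy p x - prompt_entropy p x';
         R = pair_pmf (replicate_pmf n (q x)) (replicate_pmf n (q x'))
     in measure_pmf.prob R
          {(ys, ys'). \<bar>(emp_resp_entropy p x ys - emp_resp_entropy p x' ys') - a * \<Delta>V\<bar> \<le> bound}
          \<ge> 1 - 2 * \<alpha>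
      \<and> (\<bar>a * \<Delta>V\<bar> > bound \<longrightarrow>
          measure_pmf.prob R
            {(ys, ys'). sgn (emp_resp_entropy p x ys - emp_resp_entropy p x' ys') = sgn \<Delta>V}
            \<ge> 1 - 2 * \<alpha>))"
proof -
  define \<eta> where "\<eta> \<alpha> = ln (real CARD('v)) * sqrt (ln (2 / \<alpha>) / (2 * real n))" for \<alpha> :: real
  define bound where "bound \<alpha> = 2 * \<epsilon> + 2 * (a + 1) * \<delta> + 2 * \<eta> \<alpha>" for \<alpha>
  define \<Delta>V where "\<Delta>V = prompt_entropy p x - prompt_entropy p x'"
  define R where "R = pair_pmf (replicate_pmf n (q x)) (replicate_pmf n (q x'))"
  define good where
    "good \<alpha> z = {ys. \<bar>emp_resp_entropy p z ys - exp_resp_entropy p q z\<bar> < \<eta> \<alpha>}" for \<alpha> z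
  have good_prob: "measure_pmf.prob R (good \<alpha> x \<times> good \<alpha> x') \<ge> 1 - 2 * \<alpha>"
    if "0 < \<alpha>" "\<alpha> < 1" for \<alpha>
  proof -
    have "measure_pmf.prob (replicate_pmf n (q z)) (good \<alpha> z) \<ge> 1 - \<alpha>" for z
      unfolding good_def \<eta>_def
      by (rule emp_resp_entropy_concentration[OF vocab]) (use n_pos that in auto)
    then show ?thesis unfolding R_def using pair_pmf_prob_times_ge by fastforce
  qed
  have gap: "\<bar>(emp_resp_entropy p x ys - emp_resp_entropy p x' ys') - a * \<Delta>V\<bar> \<le> bound \<alpha>"
    if "(ys, ys') \<in> good \<alpha> x \<times> good \<alpha> x'" for \<alpha> ys ys'
    unfolding bound_def \<Delta>V_def
    by (rule abs_diff_sub_affine_diff_le[OF a_pos approx_prompt_x approx_prompt_x' approx_resp_x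
        approx_resp_x' prop_x prop_x']) (use that in \<open>auto simp: good_def\<close>)
  have "measure_pmf.prob R
      {(ys, ys'). \<bar>(emp_resp_entropy p x ys - emp_resp_entropy p x' ys') - a * \<Delta>V\<bar> \<le> bound \<alpha>}
      \<ge> 1 - 2 * \<alpha>" if "0 < \<alpha>" "\<alpha> < 1" for \<alpha>
    using good_prob[OF that] by (rule order_trans)
      (use gap in \<open>auto intro!: measure_pmf.finite_measure_mono\<close>)
  moreover have "measure_pmf.prob R
      {(ys, ys'). sgn (emp_resp_entropy p x ys - emp_resp_entropy p x' ys') = sgn \<Delta>V}
      \<ge> 1 - 2 * \<alpha>" if "0 < \<alpha>" "\<alpha> < 1" "\<bar>a * \<Delta>V\<bar> > bound \<alpha>" for \<alpha>
    using good_prob[OF that(1,2)] by (rule order_trans)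
      (use gap sgn_eq_if_abs_diff_le[OF a_pos _ that(3)]
        in \<open>auto intro!: measure_pmf.finite_measure_mono\<close>)
  ultimately show ?thesis
    unfolding Let_def \<eta>_def[symmetric] bound_def[symmetric] \<Delta>V_def[symmetric] R_def[symmetric]
    by blast
qed

end
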